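(* Fix a dimension $D\geqslant 2$. For any integer $r\geqslant 4$, any integer $m$ with $1\leqslant m\leqslant r/4$, and any integer $n$ with $2r m^{D-1}\leqslant n\leqslant r^D$, there is a subset $S$ of $n$ points of the integer grid $\{0,1,\dots,r-1\}^D$ such that $$\Delta(S, m^D-1)\geqslant \frac{r}{2m}-1.$$
   Context: For a graph $G$ whose vertices are points in $\mathbb{R}^D$, each edge $(u,v)$ has weight equal to the Euclidean distance $d(u,v)$ (edges may cross or overlap), and $d_G(u,v)$ is the length of a shortest path in $G$ between $u$ and $v$. The dilation of $G$ is $\Delta(G)=\max_{u\neq v\in V(G)} d_G(u,v)/d(u,v)$ (infinite if $G$ is disconnected). For a finite set $S$ of $n$ points and an integer $k\ge0$, $\Delta(S,k)$ is the minimum of $\Delta(G)$ over all graphs $G$ with vertex set exactly $S$ and exactly $n-1+k$ edges. *)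

theory Defs
  imports "HOL-Analysis.Analysis" "HOL-Library.Extended_Real"
begin

definition pairs_on :: "'a set \<Rightarrow> 'a set set" where
  "pairs_on S = {{u, v} | u v. u \<in> S \<and> v \<in> S \<and> u \<noteq> v}"

definition is_walk :: "'a set set \<Rightarrow> 'a list \<Rightarrow> 'a \<Rightarrow> 'a \<Rightarrow> bool" where
  "is_walk E p u v \<longleftrightarrow> p \<noteq> [] \<and> hd p = u \<and> last p = v \<and>
     (\<forall>i. Suc i < length p \<longrightarrow> {p ! i, p ! Suc i} \<in> E)"

definition walk_length :: "'a::metric_space list \<Rightarrow> real" where
  "walk_length p = (\<Sum>i<length p - 1. dist (p ! i) (p ! Suc i))"

text \<open>Shortest-path distance d_G(u,v); infinite if no path.\<close>
definition graph_dist :: "'a::metric_space set set \<Rightarrow> 'a \<Rightarrow> 'a \<Rightarrow> ereal" where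
  "graph_dist E u v = Inf {ereal (walk_length p) | p. is_walk E p u v}"

definition dilation :: "'a::metric_space set \<Rightarrow> 'a set set \<Rightarrow> ereal" where
  "dilation S E = Sup {graph_dist E u v / ereal (dist u v) | u v. u \<in> S \<and> v \<in> S \<and> u \<noteq> v}"

definition min_dilation :: "'a::metric_space set \<Rightarrow> nat \<Rightarrow> ereal" where
  "min_dilation S k = Inf {dilation S E | E. E \<subseteq> pairs_on S \<and> card E = card S - 1 + k}"

definition int_grid :: "nat \<Rightarrow> (real^'d) set" where
  "int_grid r = {x. \<forall>i. \<exists>j::nat. j < r \<and> x $ i = real j}"

end

theory Submission
  imports Defs
begin

(*
  Let s = r div 2m and T = r/(2m) - 1, so T <= s. For each J in {0..m-1}^D take the boundary
  of an s x s lattice square (4s points) in the plane of two fixed axes, translated by 2sJ.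
  These m^D rings have at most 4s m^D <= 2r m^(D-1) <= n points; add grid points to get S
  with |S| = n.

  Suppose a graph on S with |S| - 1 + m^D - 1 edges had dilation below T. Consecutive ring
  points are at distance 1, so they are joined by walks of length < T, and these walks stay in
  a neighbourhood of their ring; the neighbourhoods of different rings are disjoint. Together
  the walks of one ring form a closed walk winding once around the centre of the square, so
  it crosses a fixed ray from the centre an odd number of times, whereas a closed walk in a
  forest traverses every edge an even number of times. Hence every neighbourhood contains an
  edge lying on a cycle. Deleting one such edge per ring keeps the graph connected, so the
  graph has at least |S| - 1 + m^D edges, a contradiction.
*)

lemma is_walk_Nil [simp]: "\<not> is_walk E [] u v"
  by (simp add: is_walk_def)

lemma is_walk_singleton [simp]: "is_walk E [x] u v \<longleftrightarrow> x = u \<and> x = v"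
  by (auto simp: is_walk_def)

lemma is_walk_ConsD: "is_walk E (x # p) u v \<Longrightarrow> x = u"
  by (simp add: is_walk_def)

lemma is_walk_Cons_Cons [simp]:
  "is_walk E (x # y # p) u v \<longleftrightarrow> x = u \<and> {x, y} \<in> E \<and> is_walk E (y # p) y v"
proof -
  have "(\<forall>i. Suc i < length (x # y # p) \<longrightarrow> {(x # y # p) ! i, (x # y # p) ! Suc i} \<in> E) \<longleftrightarrow>
        {x, y} \<in> E \<and> (\<forall>i. Suc i < length (y # p) \<longrightarrow> {(y # p) ! i, (y # p) ! Suc i} \<in> E)"
    by (auto simp: less_Suc_eq_0_disj)
  then show ?thesis
    unfolding is_walk_def by auto
qed

definition reachable :: "'a set set \<Rightarrow> 'a \<Rightarrow> 'a \<Rightarrow> bool" where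
  "reachable E = (\<lambda>x y. {x, y} \<in> E)\<^sup>*\<^sup>*"

lemma reachable_iff_is_walk: "reachable E u v \<longleftrightarrow> (\<exists>p. is_walk E p u v)"
proof
  assume "reachable E u v"
  then show "\<exists>p. is_walk E p u v"
    unfolding reachable_def
  proof (induction rule: converse_rtranclp_induct)
    case base
    show ?case by (rule exI[of _ "[v]"]) simp
  next
    case (step x y)
    then obtain p where "is_walk E p y v" by blast
    with step.hyps(1) have "is_walk E (x # p) x v"
      by (cases p) (auto dest: is_walk_ConsD)
    then show ?case by blast
  qed
next
  assume "\<exists>p. is_walk E p u v"
  then obtain p where "is_walk E p u v" by blast
  then show "reachable E u v"
  proof (induction p arbitrary: u)
    case (Cons x p)
    then show ?case
      by (cases p) (auto simp: reachable_def intro: converse_rtranclp_into_rtranclp)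
  qed simp
qed

lemma reachable_refl: "reachable E u u"
  by (simp add: reachable_def)

lemma reachable_edge: "{u, v} \<in> E \<Longrightarrow> reachable E u v"
  unfolding reachable_def by (rule r_into_rtranclp)

lemma reachable_trans: "reachable E u w \<Longrightarrow> reachable E w v \<Longrightarrow> reachable E u v"
  unfolding reachable_def by (rule rtranclp_trans)

lemma reachable_sym: "reachable E u v \<Longrightarrow> reachable E v u"
proof -
  have "symp (\<lambda>x y. {x, y} \<in> E)"
    by (auto intro: sympI simp: insert_commute)
  then show "reachable E u v \<Longrightarrow> reachable E v u"
    unfolding reachable_def by (metis symp_rtranclp sympD)
qed

lemma reachable_if_edges_reachable:
  assumes "reachable E u v" and "\<And>x y. {x, y} \<in> E \<Longrightarrow> reachable F x y"
  shows "reachable F u v"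
  using assms(1) unfolding reachable_def
  by (induction rule: rtranclp_induct)
    (auto intro: rtranclp_trans dest: assms(2)[unfolded reachable_def])

lemma reachable_mono: "E \<subseteq> F \<Longrightarrow> reachable E u v \<Longrightarrow> reachable F u v"
  by (auto intro: reachable_if_edges_reachable reachable_edge)

lemma is_walk_restrict:
  "is_walk E p u v \<Longrightarrow> set p \<subseteq> U \<Longrightarrow> is_walk {e \<in> E. e \<subseteq> U} p u v"
  unfolding is_walk_def by (auto dest: nth_mem)

lemma finite_pairs_on: "finite S \<Longrightarrow> finite (pairs_on S)"
proof -
  have "pairs_on S \<subseteq> (\<lambda>(u, v). {u, v}) ` (S \<times> S)"
    unfolding pairs_on_def by auto
  then show "finite S \<Longrightarrow> finite (pairs_on S)"
    by (rule finite_subset) simp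
qed

section \<open>Edge counts of connected graphs\<close>

(* Sending each vertex other than the root to the first edge of a shortest walk to the
   root is injective. *)
lemma card_edges_ge_if_connected:
  assumes finE: "finite E" and conn: "\<forall>u\<in>S. \<forall>v\<in>S. reachable E u v"
  shows "card S - 1 \<le> card E"
proof (cases "S = {}")
  case False
  then obtain root where root: "root \<in> S" by blast
  define hops where "hops v = (LEAST n. \<exists>p. is_walk E p v root \<and> length p = n)" for v
  have "\<exists>w. {v, w} \<in> E \<and> hops w < hops v" if "v \<in> S" "v \<noteq> root" for v
  proof -
    from conn root that(1) obtain p where "is_walk E p v root"
      unfolding reachable_iff_is_walk by blast
    then have "\<exists>n p. is_walk E p v root \<and> length p = n"
      by blast
    then have "\<exists>p. is_walk E p v root \<and> length p = hops v"
      unfolding hops_def by (rule LeastI_ex)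
    then obtain p where p: "is_walk E p v root" "length p = hops v" by blast
    obtain w q where "p = v # w # q"
    proof (cases p)
      case (Cons x p')
      with p(1) have "x = v" by (simp add: is_walk_ConsD)
      with Cons p(1) \<open>v \<noteq> root\<close> have "p' \<noteq> []" by auto
      with Cons \<open>x = v\<close> show ?thesis by (metis list.exhaust that)
    qed (use p in simp)
    with p(1) have "{v, w} \<in> E" "is_walk E (w # q) w root" by simp_all
    moreover from this(2) have "hops w \<le> length (w # q)"
      unfolding hops_def by (intro Least_le) blast
    ultimately show ?thesis using p(2) \<open>p = v # w # q\<close> by auto
  qed
  then have "\<forall>v\<in>S - {root}. \<exists>w. {v, w} \<in> E \<and> hops w < hops v"
    by blast
  then obtain next_hop where next_hop:
    "\<forall>v\<in>S - {root}. {v, next_hop v} \<in> E \<and> hops (next_hop v) < hops v"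
    by (rule bchoice[elim_format]) blast
  have "inj_on (\<lambda>v. {v, next_hop v}) (S - {root})"
  proof (rule inj_onI)
    fix v w assume vw: "v \<in> S - {root}" "w \<in> S - {root}" "{v, next_hop v} = {w, next_hop w}"
    show "v = w"
    proof (rule ccontr)
      assume "v \<noteq> w"
      with vw(3) have "v = next_hop w" "w = next_hop v" by (auto simp: doubleton_eq_iff)
      moreover have "hops (next_hop v) < hops v" "hops (next_hop w) < hops w"
        using next_hop vw(1,2) by auto
      ultimately show False by simp
    qed
  qed
  then have "card (S - {root}) \<le> card E"
    by (rule card_inj_on_le[OF _ _ finE]) (use next_hop in blast)
  with root show ?thesis by simp
qed simp

definition on_cycle :: "'a set set \<Rightarrow> 'a set \<Rightarrow> bool" where
  "on_cycle E e \<longleftrightarrow> e \<in> E \<and> (\<exists>a b. e = {a, b} \<and> reachable (E - {e}) a b)"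

lemma card_edges_ge_if_disjoint_cycles:
  fixes U :: "'j \<Rightarrow> 'a set"
  assumes finE: "finite E" and conn: "\<forall>u\<in>S. \<forall>v\<in>S. reachable E u v"
    and disj: "disjoint_family_on U Js"
    and cyc: "\<forall>J\<in>Js. \<exists>e. on_cycle {e \<in> E. e \<subseteq> U J} e"
  shows "card S - 1 + card Js \<le> card E"
proof -
  from cyc obtain c where c: "\<And>J. J \<in> Js \<Longrightarrow> on_cycle {e \<in> E. e \<subseteq> U J} (c J)"
    by metis
  have c_in: "c J \<in> E" "c J \<subseteq> U J" "c J \<noteq> {}" if "J \<in> Js" for J
    using c[OF that] by (auto simp: on_cycle_def)
  have c_notin: "\<not> c J' \<subseteq> U J" if "J \<in> Js" "J' \<in> Js" "J' \<noteq> J" for J J'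
    using c_in[OF that(2)] disj that unfolding disjoint_family_on_def by blast
  have inj: "inj_on c Js"
  proof (rule inj_onI)
    fix J J' assume "J \<in> Js" "J' \<in> Js" "c J = c J'"
    with c_in(2) c_notin show "J = J'" by metis
  qed
  define F where "F = c ` Js"
  have FE: "F \<subseteq> E"
    unfolding F_def using c_in by blast
  have reach_F: "reachable (E - F) x y" if "{x, y} \<in> E" for x y
  proof (cases "{x, y} \<in> F")
    case False
    with that show ?thesis by (intro reachable_edge) blast
  next
    case True
    then obtain J where J: "J \<in> Js" "{x, y} = c J"
      unfolding F_def by blast
    with c obtain a b where ab: "c J = {a, b}" "reachable ({e \<in> E. e \<subseteq> U J} - {c J}) a b"
      unfolding on_cycle_def by blast
    have "{e \<in> E. e \<subseteq> U J} - {c J} \<subseteq> E - F"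
      using c_notin[OF J(1)] unfolding F_def by blast
    with ab(2) have "reachable (E - F) a b"
      by (rule reachable_mono[rotated])
    with J(2) ab(1) show ?thesis
      using reachable_sym by (metis doubleton_eq_iff)
  qed
  have "\<forall>u\<in>S. \<forall>v\<in>S. reachable (E - F) u v"
    using conn reachable_if_edges_reachable[OF _ reach_F] by blast
  with finE have "card S - 1 \<le> card (E - F)"
    by (intro card_edges_ge_if_connected) auto
  moreover have "card F = card Js"
    unfolding F_def using inj by (rule card_image)
  moreover have "card (E - F) = card E - card F"
    using card_Diff_subset[OF finite_subset[OF FE finE] FE] .
  moreover have "card F \<le> card E"
    using card_mono[OF finE FE] .
  ultimately show ?thesis by linarith
qed

section \<open>Parity of edge traversals\<close>

definition traversals :: "'a set set \<Rightarrow> 'a list \<Rightarrow> nat" where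
  "traversals X p = (\<Sum>k<length p - 1. if {p ! k, p ! Suc k} \<in> X then 1 else 0)"

lemma traversals_eq_0: "(\<And>k. Suc k < length p \<Longrightarrow> {p ! k, p ! Suc k} \<notin> X) \<Longrightarrow> traversals X p = 0"
  unfolding traversals_def by (intro sum.neutral) auto

lemma traversals_eq_sum_singletons:
  assumes "finite X"
  shows "traversals X p = (\<Sum>e\<in>X. traversals {e} p)"
proof -
  have "traversals X p = (\<Sum>k<length p - 1. \<Sum>e\<in>X. if {p ! k, p ! Suc k} = e then 1 else 0)"
    unfolding traversals_def using assms by (intro sum.cong) auto
  also have "\<dots> = (\<Sum>e\<in>X. traversals {e} p)"
    unfolding traversals_def by (subst sum.swap) simp
  finally show ?thesis .
qed

lemma even_count_changes_iff:
  "even (\<Sum>k<n. if h k \<noteq> h (Suc k) then 1 else (0::nat)) \<longleftrightarrow> (h 0 \<longleftrightarrow> h n)"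
  by (induction n) auto

lemma even_count_changes_along_list_iff:
  assumes "p \<noteq> []"
  shows "even (\<Sum>k<length p - 1. if g (p ! k) \<noteq> g (p ! Suc k) then 1 else (0::nat))
    \<longleftrightarrow> (g (hd p) \<longleftrightarrow> g (last p))"
  using even_count_changes_iff[of "\<lambda>k. g (p ! k)" "length p - 1"] assms
  by (simp add: hd_conv_nth last_conv_nth)

lemma even_sum_cong:
  fixes n :: nat
  shows "(\<And>i. i < n \<Longrightarrow> even (f i) \<longleftrightarrow> even (g i)) \<Longrightarrow>
    even (\<Sum>i<n. f i :: nat) \<longleftrightarrow> even (\<Sum>i<n. g i :: nat)"
  by (induction n) auto

lemma even_traversals_iff_same_side:
  assumes walk: "is_walk G p u v"
    and X_iff: "\<And>k. Suc k < length p \<Longrightarrow> {p ! k, p ! Suc k} \<in> X \<longleftrightarrow> g (p ! k) \<noteq> g (p ! Suc k)"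
  shows "even (traversals X p) \<longleftrightarrow> (g u \<longleftrightarrow> g v)"
proof -
  have "traversals X p = (\<Sum>k<length p - 1. if g (p ! k) \<noteq> g (p ! Suc k) then 1 else 0)"
    unfolding traversals_def using X_iff by (intro sum.cong) auto
  with walk show ?thesis
    using even_count_changes_along_list_iff[of p g] by (simp add: is_walk_def)
qed

lemma even_traversals_bridge_iff:
  assumes walk: "is_walk G p u v" and e: "e = {a, b}" and bridge: "\<not> reachable (G - {e}) a b"
  shows "even (traversals {e} p) \<longleftrightarrow> (reachable (G - {e}) a u \<longleftrightarrow> reachable (G - {e}) a v)"
proof -
  let ?side = "reachable (G - {e}) a"
  have side_change: "{x, y} \<in> {e} \<longleftrightarrow> ?side x \<noteq> ?side y" if xy: "{x, y} \<in> G" for x y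
  proof (cases "{x, y} = e")
    case True
    then have "x = a \<and> y = b \<or> x = b \<and> y = a"
      using e by (auto simp: doubleton_eq_iff)
    with True bridge reachable_refl[of "G - {e}" a] show ?thesis
      by auto
  next
    case False
    with xy have "reachable (G - {e}) x y"
      by (intro reachable_edge) blast
    moreover from this have "reachable (G - {e}) y x"
      by (rule reachable_sym)
    ultimately have "?side x \<longleftrightarrow> ?side y"
      by (meson reachable_trans)
    with False show ?thesis
      by simp
  qed
  show ?thesis
  proof (rule even_traversals_iff_same_side[OF walk])
    fix k assume "Suc k < length p"
    with walk have "{p ! k, p ! Suc k} \<in> G"
      by (simp add: is_walk_def)
    then show "{p ! k, p ! Suc k} \<in> {e} \<longleftrightarrow> ?side (p ! k) \<noteq> ?side (p ! Suc k)"
      by (rule side_change)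
  qed
qed

(* In a forest every edge is a bridge, and a closed walk crosses a bridge an even number
   of times. *)
lemma even_traversals_closed_chain_if_no_cycle:
  assumes finX: "finite X" and XG: "X \<subseteq> G" and X_pairs: "\<forall>e\<in>X. \<exists>a b. e = {a, b}"
    and acyclic: "\<nexists>e. on_cycle G e"
    and closed: "q n = q 0" and walks: "\<And>i. i < n \<Longrightarrow> is_walk G (P i) (q i) (q (Suc i))"
  shows "even (\<Sum>i<n. traversals X (P i))"
proof -
  have "even (\<Sum>i<n. traversals {e} (P i))" if "e \<in> X" for e
  proof -
    from that X_pairs obtain a b where e: "e = {a, b}" by blast
    with that XG acyclic have bridge: "\<not> reachable (G - {e}) a b"
      unfolding on_cycle_def by blast
    let ?side = "reachable (G - {e}) a"
    have "even (\<Sum>i<n. traversals {e} (P i))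
        \<longleftrightarrow> even (\<Sum>i<n. if ?side (q i) \<noteq> ?side (q (Suc i)) then 1 else (0::nat))"
      using even_traversals_bridge_iff[OF walks e bridge] by (intro even_sum_cong) auto
    also have "\<dots> \<longleftrightarrow> (?side (q 0) \<longleftrightarrow> ?side (q n))"
      by (rule even_count_changes_iff)
    finally show ?thesis
      using closed by simp
  qed
  moreover have "(\<Sum>i<n. traversals X (P i)) = (\<Sum>e\<in>X. \<Sum>i<n. traversals {e} (P i))"
    unfolding traversals_eq_sum_singletons[OF finX] by (rule sum.swap)
  ultimately show ?thesis
    by (simp add: dvd_sum)
qed

(* The edges inside the region A whose endpoints lie on different sides of B; in the
   plane, the edges crossing the ray where A holds on the boundary of B. *)
definition crossing_edges :: "'a set set \<Rightarrow> ('a \<Rightarrow> bool) \<Rightarrow> ('a \<Rightarrow> bool) \<Rightarrow> 'a set set" where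
  "crossing_edges G A B = {e \<in> G. (\<forall>v\<in>e. A v) \<and> (\<exists>a\<in>e. \<exists>b\<in>e. B a \<noteq> B b)}"

lemma traversals_crossing_edges_eq_0_outside:
  "\<forall>v\<in>set p. \<not> A v \<Longrightarrow> traversals (crossing_edges G A B) p = 0"
  by (rule traversals_eq_0) (auto simp: crossing_edges_def)

lemma traversals_crossing_edges_eq_0_one_side:
  "\<forall>v\<in>set p. B v = c \<Longrightarrow> traversals (crossing_edges G A B) p = 0"
  by (rule traversals_eq_0) (auto simp: crossing_edges_def)

lemma even_traversals_crossing_edges_iff:
  assumes walk: "is_walk G p u v" and inside: "\<forall>v\<in>set p. A v"
  shows "even (traversals (crossing_edges G A B) p) \<longleftrightarrow> (B u \<longleftrightarrow> B v)"
proof (rule even_traversals_iff_same_side[OF walk])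
  fix k assume k: "Suc k < length p"
  with walk have "{p ! k, p ! Suc k} \<in> G"
    by (simp add: is_walk_def)
  moreover from k inside have "A (p ! k)" "A (p ! Suc k)"
    by simp_all
  ultimately show "{p ! k, p ! Suc k} \<in> crossing_edges G A B \<longleftrightarrow> B (p ! k) \<noteq> B (p ! Suc k)"
    by (auto simp: crossing_edges_def)
qed

lemma dist_nth_le_sum_steps:
  fixes p :: "'a::metric_space list"
  assumes "j \<le> l" and "l < length p"
  shows "dist (p ! j) (p ! l) \<le> (\<Sum>i\<in>{j..<l}. dist (p ! i) (p ! Suc i))"
  using assms
proof (induction l)
  case (Suc l)
  show ?case
  proof (cases "j = Suc l")
    case False
    with Suc have "dist (p ! j) (p ! l) \<le> (\<Sum>i\<in>{j..<l}. dist (p ! i) (p ! Suc i))"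
      by simp
    moreover have "dist (p ! j) (p ! Suc l) \<le> dist (p ! j) (p ! l) + dist (p ! l) (p ! Suc l)"
      by (rule dist_triangle)
    ultimately show ?thesis
      using False Suc.prems by simp
  qed simp
qed simp

lemma dist_le_walk_length:
  fixes p :: "'a::metric_space list"
  assumes walk: "is_walk E p u v" and x: "x \<in> set p"
  shows "dist u x + dist x v \<le> walk_length p"
proof -
  from x obtain k where k: "k < length p" "x = p ! k"
    by (metis in_set_conv_nth)
  from walk have "p \<noteq> []" "u = p ! 0" "v = p ! (length p - 1)"
    by (auto simp: is_walk_def hd_conv_nth last_conv_nth)
  moreover have "walk_length p = (\<Sum>i\<in>{0..<k}. dist (p ! i) (p ! Suc i))
      + (\<Sum>i\<in>{k..<length p - 1}. dist (p ! i) (p ! Suc i))"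
    unfolding walk_length_def using k by (simp add: sum.atLeastLessThan_concat lessThan_atLeast0)
  moreover have "dist (p ! 0) x \<le> (\<Sum>i\<in>{0..<k}. dist (p ! i) (p ! Suc i))"
    using k dist_nth_le_sum_steps[of 0 k p] by simp
  moreover have "dist x (p ! (length p - 1)) \<le> (\<Sum>i\<in>{k..<length p - 1}. dist (p ! i) (p ! Suc i))"
    using k dist_nth_le_sum_steps[of k "length p - 1" p] by simp
  ultimately show ?thesis
    by simp
qed

lemma abs_nth_diff_lt_half_if_on_walk:
  fixes u w :: "real^'n"
  assumes "is_walk E p u w" and "walk_length p < T" and "v \<in> set p"
    and "u $ k = c" and "w $ k = c"
  shows "\<bar>v $ k - c\<bar> < T / 2"
  using dist_le_walk_length[OF assms(1,3)] assms(2,4,5)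
    dist_vec_nth_le[of u k v] dist_vec_nth_le[of v k w]
  by (simp add: dist_real_def abs_minus_commute)

lemma dist_vec_eq_abs_if_same_except:
  fixes x y :: "real^'n"
  assumes "\<And>k. k \<noteq> j \<Longrightarrow> x $ k = y $ k"
  shows "dist x y = \<bar>x $ j - y $ j\<bar>"
proof -
  have "UNIV = insert j (UNIV - {j})"
    by blast
  then have "dist x y = L2_set (\<lambda>i. dist (x $ i) (y $ i)) (insert j (UNIV - {j}))"
    unfolding dist_vec_def by simp
  also have "\<dots> = sqrt ((dist (x $ j) (y $ j))\<^sup>2 + (L2_set (\<lambda>i. dist (x $ i) (y $ i)) (UNIV - {j}))\<^sup>2)"
    by (rule L2_set_insert) simp_all
  also have "L2_set (\<lambda>i. dist (x $ i) (y $ i)) (UNIV - {j}) = 0"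
    using assms by (intro L2_set_0') simp
  finally show ?thesis
    by (simp add: dist_real_def)
qed

lemma short_walk_if_dilation_less:
  assumes "dilation S E < ereal T" and "u \<in> S" "v \<in> S" "u \<noteq> v"
  shows "\<exists>p. is_walk E p u v \<and> walk_length p < T * dist u v"
proof -
  have "graph_dist E u v / ereal (dist u v) \<le> dilation S E"
    unfolding dilation_def using assms(2-4) by (intro Sup_upper) blast
  then have "graph_dist E u v / ereal (dist u v) < ereal T"
    using assms(1) by (rule le_less_trans)
  moreover have "0 < dist u v"
    using assms(4) by simp
  ultimately have "graph_dist E u v < ereal (T * dist u v)"
    by (cases "graph_dist E u v") (auto simp: field_simps)
  then show ?thesis
    unfolding graph_dist_def by (auto simp: Inf_less_iff)
qed

lemma reachable_if_dilation_less:
  assumes "dilation S E < ereal T" and "u \<in> S" and "v \<in> S"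
  shows "reachable E u v"
proof (cases "u = v")
  case False
  with short_walk_if_dilation_less[OF assms] show ?thesis
    unfolding reachable_iff_is_walk by blast
qed (simp add: reachable_refl)

lemma int_grid_eq_image: "int_grid r = (\<lambda>f. \<chi> k. real (f k)) ` (UNIV \<rightarrow>\<^sub>E {..<r})"
proof
  show "(\<lambda>f. \<chi> k. real (f k)) ` (UNIV \<rightarrow>\<^sub>E {..<r}) \<subseteq> int_grid r"
    unfolding int_grid_def by (auto simp: PiE_UNIV_domain)
  show "int_grid r \<subseteq> (\<lambda>f. \<chi> k. real (f k)) ` (UNIV \<rightarrow>\<^sub>E {..<r})"
  proof
    fix x :: "real^'n" assume "x \<in> int_grid r"
    then have "\<forall>k. \<exists>j. j < r \<and> x $ k = real j"
      unfolding int_grid_def by blast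
    then have "\<exists>f. \<forall>k. f k < r \<and> x $ k = real (f k)"
      by (rule choice)
    then obtain f where f: "\<forall>k. f k < r \<and> x $ k = real (f k)"
      by blast
    then have "x = (\<chi> k. real (f k))"
      by (simp add: vec_eq_iff)
    moreover from f have "f \<in> UNIV \<rightarrow>\<^sub>E {..<r}"
      by (simp add: PiE_UNIV_domain)
    ultimately show "x \<in> (\<lambda>f. \<chi> k. real (f k)) ` (UNIV \<rightarrow>\<^sub>E {..<r})"
      by blast
  qed
qed

lemma finite_int_grid: "finite (int_grid r :: (real^'n::finite) set)"
  unfolding int_grid_eq_image by (simp add: finite_PiE)

lemma card_int_grid: "card (int_grid r :: (real^'n::finite) set) = r ^ CARD('n)"
proof -
  have "inj_on (\<lambda>f. \<chi> k. real (f k) :: real^'n) (UNIV \<rightarrow>\<^sub>E {..<r})"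
    by (rule inj_onI) (simp add: vec_eq_iff fun_eq_iff)
  then show ?thesis
    unfolding int_grid_eq_image by (simp add: card_image card_PiE)
qed

lemma real_divide_minus_one_le_div: "real n / real d - 1 \<le> real (n div d)"
  using floor_correct[of "real n / real d"] by (simp add: floor_divide_of_nat_eq)

lemma exists_subset_card_between:
  assumes "finite B" "A \<subseteq> B" "card A \<le> n" "n \<le> card B"
  obtains S where "A \<subseteq> S" "S \<subseteq> B" "card S = n"
proof -
  have finA: "finite A"
    using assms(2,1) by (rule finite_subset)
  with assms have "n - card A \<le> card (B - A)"
    by (simp add: card_Diff_subset)
  then obtain C where C: "C \<subseteq> B - A" "card C = n - card A"
    by (meson obtain_subset_with_card_n)
  with assms(1) have "finite C"
    by (meson Diff_subset finite_subset)
  with C finA assms(3) have "card (A \<union> C) = n"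
    by (subst card_Un_disjoint) auto
  with C assms(2) show thesis
    by (intro that[of "A \<union> C"]) auto
qed

section \<open>Square rings\<close>

(* (square_x s i, square_y s i) runs counterclockwise around the boundary of [0, s]^2 in
   unit steps, starting at the origin and returning to it at i = 4s. *)
definition square_x :: "nat \<Rightarrow> nat \<Rightarrow> nat" where
  "square_x s i = (if i \<le> s then i else if i \<le> 2 * s then s else if i \<le> 3 * s then 3 * s - i else 0)"

definition square_y :: "nat \<Rightarrow> nat \<Rightarrow> nat" where
  "square_y s i = (if i \<le> s then 0 else if i \<le> 2 * s then i - s else if i \<le> 3 * s then s else 4 * s - i)"

lemma square_x_le: "square_x s i \<le> s"
  unfolding square_x_def by (auto split: if_splits)

lemma square_y_le: "square_y s i \<le> s"
  unfolding square_y_def by (auto split: if_splits)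

lemma square_side_cases:
  assumes "1 \<le> s" and "i < 4 * s"
  obtains (bottom) "i < s" "square_x s i = i" "square_x s (Suc i) = Suc i"
      "square_y s i = 0" "square_y s (Suc i) = 0"
    | (right) "s \<le> i" "i < 2 * s" "square_x s i = s" "square_x s (Suc i) = s"
      "square_y s i = i - s" "square_y s (Suc i) = Suc i - s"
    | (top) "2 * s \<le> i" "i < 3 * s" "square_x s i = 3 * s - i" "square_x s (Suc i) = 3 * s - Suc i"
      "square_y s i = s" "square_y s (Suc i) = s"
    | (left) "3 * s \<le> i" "square_x s i = 0" "square_x s (Suc i) = 0"
      "square_y s i = 4 * s - i" "square_y s (Suc i) = 4 * s - Suc i"
proof -
  consider "i < s" | "s \<le> i" "i < 2 * s" | "2 * s \<le> i" "i < 3 * s" | "3 * s \<le> i"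
    by linarith
  then show thesis
  proof cases
    case 1
    then show thesis by (intro bottom) (simp_all add: square_x_def square_y_def)
  next
    case 2
    with assms(1) show thesis by (intro right) (simp_all add: square_x_def square_y_def)
  next
    case 3
    with assms(1) show thesis by (intro top) (simp_all add: square_x_def square_y_def)
  next
    case 4
    with assms(1) show thesis by (intro left) (simp_all add: square_x_def square_y_def)
  qed
qed

definition square_ring :: "nat \<Rightarrow> 'n::finite \<Rightarrow> 'n \<Rightarrow> ('n \<Rightarrow> nat) \<Rightarrow> nat \<Rightarrow> real^'n" where
  "square_ring s i1 i2 J i = (\<chi> k. real (2 * s * J k +
     (if k = i1 then square_x s i else if k = i2 then square_y s i else 0)))"

lemma square_ring_nth_i1: "square_ring s i1 i2 J i $ i1 = real (2 * s * J i1) + real (square_x s i)"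
  by (simp add: square_ring_def)

lemma square_ring_nth_i2:
  "i1 \<noteq> i2 \<Longrightarrow> square_ring s i1 i2 J i $ i2 = real (2 * s * J i2) + real (square_y s i)"
  by (simp add: square_ring_def)

lemma square_ring_nth_bounds:
  "real (2 * s * J k) \<le> square_ring s i1 i2 J i $ k"
  "square_ring s i1 i2 J i $ k \<le> real (2 * s * J k) + real s"
  using square_x_le[of s i] square_y_le[of s i] by (simp_all add: square_ring_def)

lemma square_ring_4s: "square_ring s i1 i2 J (4 * s) = square_ring s i1 i2 J 0"
  by (simp add: square_ring_def square_x_def square_y_def vec_eq_iff)

lemma square_ring_in_int_grid:
  assumes "\<forall>k. J k < m" and "2 * s * m \<le> r" and "1 \<le> s"
  shows "square_ring s i1 i2 J i \<in> int_grid r"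
  unfolding int_grid_def
proof (intro CollectI allI)
  fix k
  from assms(1) have "2 * s * (J k + 1) \<le> 2 * s * m"
    by (intro mult_le_mono2) (simp add: Suc_le_eq)
  moreover have "(if k = i1 then square_x s i else if k = i2 then square_y s i else 0) \<le> s"
    using square_x_le square_y_le by simp
  ultimately have "2 * s * J k + (if k = i1 then square_x s i else if k = i2 then square_y s i else 0) < r"
    using assms(2,3) by (simp add: algebra_simps)
  then show "\<exists>j. j < r \<and> square_ring s i1 i2 J i $ k = real j"
    by (auto simp: square_ring_def)
qed

lemma dist_square_ring_Suc:
  assumes "i1 \<noteq> i2" and "1 \<le> s" and "i < 4 * s"
  shows "dist (square_ring s i1 i2 J i) (square_ring s i1 i2 J (Suc i)) = 1"
  using assms(2,3)
proof (cases rule: square_side_cases)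
  case bottom
  with assms(1) show ?thesis
    by (subst dist_vec_eq_abs_if_same_except[where j = i1]) (auto simp: square_ring_def)
next
  case right
  with assms(1) show ?thesis
    by (subst dist_vec_eq_abs_if_same_except[where j = i2]) (auto simp: square_ring_def)
next
  case top
  with assms(1) show ?thesis
    by (subst dist_vec_eq_abs_if_same_except[where j = i1]) (auto simp: square_ring_def)
next
  case left
  with assms(1,3) show ?thesis
    by (subst dist_vec_eq_abs_if_same_except[where j = i2]) (auto simp: square_ring_def)
qed

(* Every walk of length < T between consecutive ring points stays in this region. *)
definition square_ring_region :: "nat \<Rightarrow> 'n::finite \<Rightarrow> 'n \<Rightarrow> real \<Rightarrow> ('n \<Rightarrow> nat) \<Rightarrow> (real^'n) set" where
  "square_ring_region s i1 i2 T J =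
     {v. \<exists>i<4 * s. dist v (square_ring s i1 i2 J i) + dist v (square_ring s i1 i2 J (Suc i)) < T}"

lemma square_ring_region_nth_bounds:
  fixes v :: "real^'n::finite"
  assumes "v \<in> square_ring_region s i1 i2 T J"
  shows "real (2 * s * J k) - T / 2 < v $ k" and "v $ k < real (2 * s * J k) + real s + T / 2"
proof -
  let ?q = "square_ring s i1 i2 J"
  from assms obtain i where i: "dist v (?q i) + dist v (?q (Suc i)) < T"
    unfolding square_ring_region_def by blast
  have abs_le: "\<bar>v $ k - ?q j $ k\<bar> \<le> dist v (?q j)" for j
    using dist_vec_nth_le[of v k] by (simp add: dist_real_def)
  have lower: "real (2 * s * J k) \<le> ?q j $ k" and upper: "?q j $ k \<le> real (2 * s * J k) + real s" for j
    by (rule square_ring_nth_bounds)+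
  from i abs_le[of i] abs_le[of "Suc i"] lower[of i] lower[of "Suc i"] upper[of i] upper[of "Suc i"]
  show "real (2 * s * J k) - T / 2 < v $ k" and "v $ k < real (2 * s * J k) + real s + T / 2"
    by linarith+
qed

lemma square_ring_regions_disjoint:
  assumes "T \<le> real s" and "J \<noteq> J'"
  shows "square_ring_region s i1 i2 T J \<inter> square_ring_region s i1 i2 T J' = {}"
proof (rule equals0I)
  have sep: "real (2 * s * a) + 2 * real s \<le> real (2 * s * b)" if "a < b" for a b
  proof -
    from that have "2 * s * a + 2 * s \<le> 2 * s * b"
      using mult_le_mono2[of "Suc a" b "2 * s"] by simp
    then have "real (2 * s * a + 2 * s) \<le> real (2 * s * b)"
      by (rule of_nat_mono)
    then show ?thesis
      by simp
  qed
  fix v assume "v \<in> square_ring_region s i1 i2 T J \<inter> square_ring_region s i1 i2 T J'"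
  then have v: "v \<in> square_ring_region s i1 i2 T J" "v \<in> square_ring_region s i1 i2 T J'"
    by simp_all
  from assms(2) obtain k where "J k \<noteq> J' k"
    by auto
  then consider "J k < J' k" | "J' k < J k"
    by linarith
  then show False
  proof cases
    case 1
    with assms(1) sep[OF 1] square_ring_region_nth_bounds[OF v(1), of k]
      square_ring_region_nth_bounds[OF v(2), of k] show False
      by linarith
  next
    case 2
    with assms(1) sep[OF 2] square_ring_region_nth_bounds[OF v(1), of k]
      square_ring_region_nth_bounds[OF v(2), of k] show False
      by linarith
  qed
qed

(* The edges crossing the ray from the centre of the square in direction i1; the ring
   crosses this ray exactly once, in the step s + s div 2. *)
definition square_ray_crossings ::
    "nat \<Rightarrow> 'n::finite \<Rightarrow> 'n \<Rightarrow> ('n \<Rightarrow> nat) \<Rightarrow> (real^'n) set set \<Rightarrow> (real^'n) set set" where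
  "square_ray_crossings s i1 i2 J G = crossing_edges G
     (\<lambda>v. real (2 * s * J i1) + real s / 2 < v $ i1) (\<lambda>v. real (2 * s * J i2) + real s / 2 < v $ i2)"

lemma even_traversals_square_step_iff:
  fixes p :: "(real^'n::finite) list"
  assumes i12: "i1 \<noteq> i2" and s: "1 \<le> s" and T: "T \<le> real s" and i: "i < 4 * s"
    and walk: "is_walk G p (square_ring s i1 i2 J i) (square_ring s i1 i2 J (Suc i))"
    and short: "walk_length p < T"
  shows "even (traversals (square_ray_crossings s i1 i2 J G) p) \<longleftrightarrow> i \<noteq> s + s div 2"
proof -
  let ?q = "square_ring s i1 i2 J"
  define x0 y0 where "x0 = real (2 * s * J i1)" and "y0 = real (2 * s * J i2)"
  let ?A = "\<lambda>v. x0 + real s / 2 < v $ i1" and ?B = "\<lambda>v. y0 + real s / 2 < v $ i2"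
  have crossings: "square_ray_crossings s i1 i2 J G = crossing_edges G ?A ?B"
    by (simp add: square_ray_crossings_def x0_def y0_def)
  have q_i1: "?q j $ i1 = x0 + real (square_x s j)" for j
    by (simp add: square_ring_nth_i1 x0_def)
  have q_i2: "?q j $ i2 = y0 + real (square_y s j)" for j
    using i12 by (simp add: square_ring_nth_i2 y0_def)
  have near: "\<bar>v $ k - c\<bar> < T / 2" if "v \<in> set p" "?q i $ k = c" "?q (Suc i) $ k = c" for v k c
    using abs_nth_diff_lt_half_if_on_walk[OF walk short that] .
  from s i show ?thesis
  proof (cases rule: square_side_cases)
    case bottom
    then have q: "?q i $ i2 = y0" "?q (Suc i) $ i2 = y0"
      by (simp_all add: q_i2)
    have "\<not> ?B v" if "v \<in> set p" for v
      using near[OF that q] T by linarith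
    then have "traversals (crossing_edges G ?A ?B) p = 0"
      by (intro traversals_crossing_edges_eq_0_one_side[where c = False]) simp
    with bottom show ?thesis
      by (simp add: crossings)
  next
    case right
    then have q: "?q i $ i1 = x0 + real s" "?q (Suc i) $ i1 = x0 + real s"
      by (simp_all add: q_i1)
    have "?A v" if "v \<in> set p" for v
      using near[OF that q] T by linarith
    then have "even (traversals (crossing_edges G ?A ?B) p) \<longleftrightarrow> (?B (?q i) \<longleftrightarrow> ?B (?q (Suc i)))"
      by (intro even_traversals_crossing_edges_iff[OF walk]) simp
    also have "\<dots> \<longleftrightarrow> (s < 2 * (i - s) \<longleftrightarrow> s < 2 * (Suc i - s))"
    proof -
      have "?B (?q j) \<longleftrightarrow> real s < real (2 * square_y s j)" for j
        by (simp add: q_i2 mult.commute)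
      with right show ?thesis
        by (simp only: of_nat_less_iff)
    qed
    also have "\<dots> \<longleftrightarrow> (s div 2 < i - s \<longleftrightarrow> s div 2 < Suc i - s)"
      by (simp add: div_less_iff_less_mult mult.commute)
    also have "\<dots> \<longleftrightarrow> i \<noteq> s + s div 2"
      using \<open>s \<le> i\<close> by auto
    finally show ?thesis
      by (simp add: crossings)
  next
    case top
    then have q: "?q i $ i2 = y0 + real s" "?q (Suc i) $ i2 = y0 + real s"
      by (simp_all add: q_i2)
    have "?B v" if "v \<in> set p" for v
      using near[OF that q] T by linarith
    then have "traversals (crossing_edges G ?A ?B) p = 0"
      by (intro traversals_crossing_edges_eq_0_one_side[where c = True]) simp
    with top s show ?thesis
      by (simp add: crossings)
  next
    case left
    then have q: "?q i $ i1 = x0" "?q (Suc i) $ i1 = x0"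
      by (simp_all add: q_i1)
    have "\<not> ?A v" if "v \<in> set p" for v
      using near[OF that q] T by linarith
    then have "traversals (crossing_edges G ?A ?B) p = 0"
      by (intro traversals_crossing_edges_eq_0_outside) simp
    with left s show ?thesis
      by (simp add: crossings)
  qed
qed

section \<open>The lower bound\<close>

lemma on_cycle_in_square_ring_region:
  fixes E :: "(real^'n::finite) set set"
  assumes i12: "i1 \<noteq> i2" and s: "1 \<le> s" and T: "T \<le> real s"
    and finE: "finite E" and E_pairs: "\<forall>e\<in>E. \<exists>a b. e = {a, b}"
    and steps: "\<And>i. i < 4 * s \<Longrightarrow> \<exists>p. is_walk E p (square_ring s i1 i2 J i) (square_ring s i1 i2 J (Suc i))
      \<and> walk_length p < T"
  shows "\<exists>e. on_cycle {e \<in> E. e \<subseteq> square_ring_region s i1 i2 T J} e"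
proof (rule ccontr)
  let ?q = "square_ring s i1 i2 J"
  define G where "G = {e \<in> E. e \<subseteq> square_ring_region s i1 i2 T J}"
  define X where "X = square_ray_crossings s i1 i2 J G"
  assume "\<nexists>e. on_cycle {e \<in> E. e \<subseteq> square_ring_region s i1 i2 T J} e"
  then have acyclic: "\<nexists>e. on_cycle G e"
    by (simp add: G_def)
  from steps obtain P where P:
    "\<And>i. i < 4 * s \<Longrightarrow> is_walk E (P i) (?q i) (?q (Suc i)) \<and> walk_length (P i) < T"
    by metis
  have walk_G: "is_walk G (P i) (?q i) (?q (Suc i))" if i: "i < 4 * s" for i
  proof -
    from P[OF i] have walk: "is_walk E (P i) (?q i) (?q (Suc i))" and short: "walk_length (P i) < T"
      by simp_all
    have "set (P i) \<subseteq> square_ring_region s i1 i2 T J"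
    proof
      fix v assume "v \<in> set (P i)"
      from dist_le_walk_length[OF walk this] short
      have "dist v (?q i) + dist v (?q (Suc i)) < T"
        by (simp add: dist_commute)
      with i show "v \<in> square_ring_region s i1 i2 T J"
        unfolding square_ring_region_def by blast
    qed
    with walk show ?thesis
      unfolding G_def by (rule is_walk_restrict)
  qed
  have XG: "X \<subseteq> G"
    unfolding X_def square_ray_crossings_def crossing_edges_def by blast
  have GE: "G \<subseteq> E"
    unfolding G_def by blast
  have "even (\<Sum>i<4 * s. traversals X (P i))"
  proof (rule even_traversals_closed_chain_if_no_cycle[OF _ XG _ acyclic])
    show "finite X"
      using finE XG GE by (meson finite_subset)
    show "\<forall>e\<in>X. \<exists>a b. e = {a, b}"
      using E_pairs XG GE by blast
    show "?q (4 * s) = ?q 0"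
      by (rule square_ring_4s)
  qed (rule walk_G)
  moreover have "even (\<Sum>i<4 * s. traversals X (P i))
      \<longleftrightarrow> even (\<Sum>i<4 * s. if i = s + s div 2 then 1 else 0 :: nat)"
  proof (rule even_sum_cong)
    fix i assume i: "i < 4 * s"
    from P[OF i] have "walk_length (P i) < T"
      by simp
    with even_traversals_square_step_iff[OF i12 s T i walk_G[OF i]]
    show "even (traversals X (P i)) \<longleftrightarrow> even (if i = s + s div 2 then 1 else 0 :: nat)"
      by (simp add: X_def)
  qed
  moreover have "(\<Sum>i<4 * s. if i = s + s div 2 then 1 else 0 :: nat) = 1"
    using s by simp
  ultimately show False
    by simp
qed

lemma short_walk_along_square_ring:
  fixes S :: "(real^'n::finite) set"
  assumes dil: "dilation S E < ereal T" and i12: "i1 \<noteq> i2" and s: "1 \<le> s"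
    and ring: "\<And>i. i < 4 * s \<Longrightarrow> square_ring s i1 i2 J i \<in> S" and i: "i < 4 * s"
  shows "\<exists>p. is_walk E p (square_ring s i1 i2 J i) (square_ring s i1 i2 J (Suc i)) \<and> walk_length p < T"
proof -
  let ?u = "square_ring s i1 i2 J i" and ?v = "square_ring s i1 i2 J (Suc i)"
  have "?v \<in> S"
  proof (cases "Suc i = 4 * s")
    case True
    with square_ring_4s[of s i1 i2 J] s ring show ?thesis
      by simp
  next
    case False
    with i show ?thesis
      by (intro ring) simp
  qed
  moreover have dist_uv: "dist ?u ?v = 1"
    by (rule dist_square_ring_Suc[OF i12 s i])
  then have "?u \<noteq> ?v"
    by auto
  ultimately obtain p where "is_walk E p ?u ?v" "walk_length p < T * dist ?u ?v"
    using short_walk_if_dilation_less[OF dil ring[OF i]] by blast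
  with dist_uv show ?thesis
    by auto
qed

lemma dilation_ge_if_contains_square_rings:
  fixes S :: "(real^'n::finite) set"
  assumes finS: "finite S" and i12: "i1 \<noteq> i2" and s: "1 \<le> s" and T: "T \<le> real s"
    and rings: "\<And>J i. J \<in> Js \<Longrightarrow> i < 4 * s \<Longrightarrow> square_ring s i1 i2 J i \<in> S"
    and E: "E \<subseteq> pairs_on S" and few_edges: "card E < card S - 1 + card Js"
  shows "ereal T \<le> dilation S E"
proof (rule ccontr)
  assume "\<not> ereal T \<le> dilation S E"
  then have dil: "dilation S E < ereal T"
    by simp
  have finE: "finite E"
    using E finite_pairs_on[OF finS] by (rule finite_subset)
  have E_pairs: "\<forall>e\<in>E. \<exists>a b. e = {a, b}"
    using E unfolding pairs_on_def by blast
  have conn: "\<forall>u\<in>S. \<forall>v\<in>S. reachable E u v"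
    using reachable_if_dilation_less[OF dil] by blast
  have cycles: "\<forall>J\<in>Js. \<exists>e. on_cycle {e \<in> E. e \<subseteq> square_ring_region s i1 i2 T J} e"
  proof
    fix J assume "J \<in> Js"
    then have "\<And>i. i < 4 * s \<Longrightarrow> square_ring s i1 i2 J i \<in> S"
      by (rule rings)
    then show "\<exists>e. on_cycle {e \<in> E. e \<subseteq> square_ring_region s i1 i2 T J} e"
      by (intro on_cycle_in_square_ring_region[OF i12 s T finE E_pairs]
          short_walk_along_square_ring[OF dil i12 s])
  qed
  have "disjoint_family_on (square_ring_region s i1 i2 T) Js"
    using square_ring_regions_disjoint[OF T] unfolding disjoint_family_on_def by blast
  from card_edges_ge_if_disjoint_cycles[OF finE conn this cycles] few_edges show False
    by simp
qed

lemma min_dilation_ge_if_contains_square_rings: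
  fixes S :: "(real^'n::finite) set"
  assumes "finite S" and "i1 \<noteq> i2" and "1 \<le> s" and "T \<le> real s"
    and "\<And>J i. J \<in> Js \<Longrightarrow> i < 4 * s \<Longrightarrow> square_ring s i1 i2 J i \<in> S"
    and "finite Js" and "Js \<noteq> {}"
  shows "ereal T \<le> min_dilation S (card Js - 1)"
  unfolding min_dilation_def
proof (rule Inf_greatest, clarify)
  fix E assume "E \<subseteq> pairs_on S" and "card E = card S - 1 + (card Js - 1)"
  moreover from assms(6,7) have "card Js > 0"
    by (simp add: card_gt_0_iff)
  ultimately show "ereal T \<le> dilation S E"
    using dilation_ge_if_contains_square_rings[OF assms(1-5)] by simp
qed

lemma exists_grid_set_containing_square_rings:
  assumes "1 \<le> s" and "2 * s * m \<le> r"
    and "m ^ CARD('n) * (4 * s) \<le> n" and "n \<le> r ^ CARD('n)"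
  obtains S :: "(real^'n::finite) set" where "S \<subseteq> int_grid r" and "card S = n"
    and "\<And>J i. J \<in> UNIV \<rightarrow>\<^sub>E {..<m} \<Longrightarrow> i < 4 * s \<Longrightarrow> square_ring s i1 i2 J i \<in> S"
proof -
  define Js where "Js = (UNIV \<rightarrow>\<^sub>E {..<m} :: ('n \<Rightarrow> nat) set)"
  define R where "R = (\<Union>J\<in>Js. square_ring s i1 i2 J ` {..<4 * s})"
  have "R \<subseteq> int_grid r"
    unfolding R_def Js_def using square_ring_in_int_grid[OF _ assms(2,1)] by (auto simp: PiE_UNIV_domain Pi_iff)
  moreover have "card R \<le> n"
  proof -
    have "card R \<le> (\<Sum>J\<in>Js. card (square_ring s i1 i2 J ` {..<4 * s}))"
      unfolding R_def by (rule card_UN_le) (simp add: Js_def finite_PiE)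
    also have "\<dots> \<le> (\<Sum>J\<in>Js. 4 * s)"
      by (intro sum_mono) (metis card_image_le card_lessThan finite_lessThan)
    also have "\<dots> = m ^ CARD('n) * (4 * s)"
      by (simp add: Js_def card_PiE)
    finally show ?thesis
      using assms(3) by simp
  qed
  moreover have "n \<le> card (int_grid r :: (real^'n) set)"
    using assms(4) by (simp add: card_int_grid)
  ultimately obtain S where "R \<subseteq> S" "S \<subseteq> int_grid r" "card S = n"
    by (rule exists_subset_card_between[OF finite_int_grid])
  then show thesis
    by (intro that) (auto simp: R_def Js_def)
qed

theorem theorem7:
  fixes r m n :: nat
  assumes "CARD('d::finite) \<ge> 2"
    and "r \<ge> 4" and "1 \<le> m" and "4 * m \<le> r"
    and "2 * r * m ^ (CARD('d) - 1) \<le> n" and "n \<le> r ^ CARD('d)"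
  shows "\<exists>S :: (real^'d) set. S \<subseteq> int_grid r \<and> card S = n \<and>
           min_dilation S (m ^ CARD('d) - 1) \<ge> ereal (real r / (2 * real m) - 1)"
proof -
  from assms(1) have "\<not> card (UNIV :: 'd set) \<le> Suc 0"
    by simp
  then obtain i1 i2 :: 'd where i12: "i1 \<noteq> i2"
    using card_le_Suc0_iff_eq[of "UNIV :: 'd set"] by auto
  define s where "s = r div (2 * m)"
  have s: "1 \<le> s"
    using assms(3,4) by (simp add: s_def div_greater_zero_iff Suc_le_eq)
  have sm: "2 * s * m \<le> r"
    using div_times_less_eq_dividend[of r "2 * m"] by (simp add: s_def ac_simps)
  have T: "real r / (2 * real m) - 1 \<le> real s"
    using real_divide_minus_one_le_div[of r "2 * m"] by (simp add: s_def)
  have "m ^ CARD('d) * (4 * s) = 2 * m ^ (CARD('d) - 1) * (2 * s * m)"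
    using assms(1) by (simp add: power_eq_if)
  also have "\<dots> \<le> 2 * m ^ (CARD('d) - 1) * r"
    using sm by (rule mult_le_mono2)
  also have "\<dots> \<le> n"
    using assms(5) by (simp add: ac_simps)
  finally obtain S :: "(real^'d) set" where S: "S \<subseteq> int_grid r" "card S = n"
    and rings: "\<And>J i. J \<in> UNIV \<rightarrow>\<^sub>E {..<m} \<Longrightarrow> i < 4 * s \<Longrightarrow> square_ring s i1 i2 J i \<in> S"
    using exists_grid_set_containing_square_rings[OF s sm _ assms(6)] by metis
  have "ereal (real r / (2 * real m) - 1)
      \<le> min_dilation S (card (UNIV \<rightarrow>\<^sub>E {..<m} :: ('d \<Rightarrow> nat) set) - 1)"
    using S(1) assms(3) by (intro min_dilation_ge_if_contains_square_rings[OF _ i12 s T rings])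
      (auto intro: finite_subset[OF _ finite_int_grid]
        simp: finite_PiE PiE_eq_empty_iff lessThan_empty_iff)
  with S show ?thesis
    by (auto simp: card_PiE)
qed

end
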